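(* Let $G$ be a co-chordal simple graph with at least one edge, whose vertices are among the variables of $S=\mathbb{K}[x_1,\dots,x_n]$, $\mathbb{K}$ a field. Then $\operatorname{sreg}(S/I(G))\le 1$.
   Context: A graph is chordal if every induced cycle has length 3, and co-chordal if its complement graph is chordal. $I(G)=(xy : \{x,y\}\in E(G))$ is the edge ideal. Stanley regularity: for a squarefree monomial ideal $I\subset S$, a squarefree Stanley decomposition of $S/I$ is a decomposition $S/I=\bigoplus_{i=1}^r u_i\mathbb{K}[Z_i]$ as $\mathbb{K}$-vector spaces, where $Z_i\subseteq\{x_1,\dots,x_n\}$, $u_i$ are (images of) squarefree monomials with $\operatorname{supp}(u_i)\subseteq Z_i$, and each $u_i\mathbb{K}[Z_i]$ is free over $\mathbb{K}[Z_i]$. Its Stanley regularity is $\max_i\deg(u_i)$, and $\operatorname{sreg}(S/I)$ is the minimum over all such decompositions. *)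

theory Defs
  imports Main
begin

text \<open>Variables of S = K[x_1,...,x_n] are identified with the indices 1..n.
A monomial of S is an exponent vector f :: nat \<Rightarrow> nat supported in {1..n}.\<close>

definition monomial_in :: "nat set \<Rightarrow> (nat \<Rightarrow> nat) \<Rightarrow> bool" where
  "monomial_in Z f \<longleftrightarrow> (\<forall>v. v \<notin> Z \<longrightarrow> f v = 0)"

definition simple_graph :: "nat \<Rightarrow> nat set \<Rightarrow> nat set set \<Rightarrow> bool" where
  "simple_graph n V E \<longleftrightarrow> V \<subseteq> {1..n} \<and> (\<forall>e\<in>E. card e = 2 \<and> e \<subseteq> V)"

definition complement_edges :: "nat set \<Rightarrow> nat set set \<Rightarrow> nat set set" where
  "complement_edges V E = {{a, b} | a b. a \<in> V \<and> b \<in> V \<and> a \<noteq> b \<and> {a, b} \<notin> E}"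

definition induced_cycle :: "nat set \<Rightarrow> nat set set \<Rightarrow> nat list \<Rightarrow> bool" where
  "induced_cycle V E cs \<longleftrightarrow> length cs \<ge> 3 \<and> distinct cs \<and> set cs \<subseteq> V \<and>
     (\<forall>i < length cs. \<forall>j < length cs. i \<noteq> j \<longrightarrow>
        ({cs ! i, cs ! j} \<in> E \<longleftrightarrow>
           (j = Suc i mod length cs \<or> i = Suc j mod length cs)))"

definition chordal :: "nat set \<Rightarrow> nat set set \<Rightarrow> bool" where
  "chordal V E \<longleftrightarrow> (\<forall>cs. induced_cycle V E cs \<longrightarrow> length cs = 3)"

definition co_chordal :: "nat set \<Rightarrow> nat set set \<Rightarrow> bool" where
  "co_chordal V E \<longleftrightarrow> chordal V (complement_edges V E)"

text \<open>Standard monomials of S/I(G): monomials of S not divisible by any x_a x_b with {a,b} an edge.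
Their images form a K-basis of S/I(G) (I(G) is a monomial ideal).\<close>
definition std_monomial :: "nat \<Rightarrow> nat set set \<Rightarrow> (nat \<Rightarrow> nat) \<Rightarrow> bool" where
  "std_monomial n E f \<longleftrightarrow> monomial_in {1..n} f \<and> (\<forall>e\<in>E. \<not> (\<forall>v\<in>e. 1 \<le> f v))"

text \<open>Monomials of u K[Z], u a squarefree monomial given by its support.\<close>
definition stanley_piece :: "nat set \<Rightarrow> nat set \<Rightarrow> (nat \<Rightarrow> nat) set" where
  "stanley_piece u Z = {(\<lambda>v. (if v \<in> u then 1 else 0) + m v) | m. monomial_in Z m}"

text \<open>Squarefree Stanley decomposition S/I = \<Oplus> u_i K[Z_i]: each u_i K[Z_i] is free over K[Z_i]
(equivalently: no monomial u_i m, m in K[Z_i], lies in I) and the sum is direct and exhausts S/I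
(equivalently: every standard monomial lies in exactly one piece).\<close>
definition sqfree_stanley_decomp :: "nat \<Rightarrow> nat set set \<Rightarrow> (nat set \<times> nat set) set \<Rightarrow> bool" where
  "sqfree_stanley_decomp n E D \<longleftrightarrow> finite D \<and>
     (\<forall>(u, Z) \<in> D. Z \<subseteq> {1..n} \<and> u \<subseteq> Z \<and> stanley_piece u Z \<subseteq> Collect (std_monomial n E)) \<and>
     (\<forall>f. std_monomial n E f \<longrightarrow> (\<exists>!p. p \<in> D \<and> f \<in> stanley_piece (fst p) (snd p)))"

definition sreg :: "nat \<Rightarrow> nat set set \<Rightarrow> nat" where
  "sreg n E = (LEAST k. \<exists>D. sqfree_stanley_decomp n E D \<and> (\<forall>(u, Z) \<in> D. card u \<le> k))"

end

theory Submission
  imports Defs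
begin

text \<open>A monomial is standard for I(G) exactly when its support meets V in a clique of the
complement graph, which is chordal. Every nonempty chordal graph has a simplicial vertex w
(Dirac), so removing such vertices one at a time partitions the cliques of the complement into
intervals [{}, {}] and [{w}, N[w]]. Enlarging the upper end of each interval by the variables
outside V turns it into a Stanley space u K[Z] with deg u \<le> 1.\<close>

definition adjacent :: "nat set set \<Rightarrow> nat \<Rightarrow> nat \<Rightarrow> bool" where
  "adjacent F x y \<longleftrightarrow> {x, y} \<in> F"

lemma adjacent_commute: "adjacent F x y \<longleftrightarrow> adjacent F y x"
  by (simp add: adjacent_def insert_commute)

lemma adjacent_flip: "(\<lambda>x y. adjacent F y x) = adjacent F"
  using adjacent_commute by blast

definition nbhd :: "nat set set \<Rightarrow> nat \<Rightarrow> nat set" where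
  "nbhd F x = {y. adjacent F x y}"

lemma mem_nbhd_iff [simp]: "y \<in> nbhd F x \<longleftrightarrow> adjacent F x y"
  by (simp add: nbhd_def)

definition clique :: "nat set set \<Rightarrow> nat set \<Rightarrow> bool" where
  "clique F K \<longleftrightarrow> (\<forall>x\<in>K. \<forall>y\<in>K. x \<noteq> y \<longrightarrow> adjacent F x y)"

lemma clique_subset: "clique F K \<Longrightarrow> K' \<subseteq> K \<Longrightarrow> clique F K'"
  unfolding clique_def by blast

definition simplicial :: "nat set set \<Rightarrow> nat set \<Rightarrow> nat \<Rightarrow> bool" where
  "simplicial F U w \<longleftrightarrow> clique F (nbhd F w \<inter> U)"

section \<open>Walks and induced paths\<close>

lemma successively_take_drop:
  assumes "successively R xs" "i < j" "j < length xs" "R (xs ! i) (xs ! j)"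
  shows "successively R (take (Suc i) xs @ drop j xs)"
proof -
  have "successively R (take (Suc i) xs)" "successively R (drop j xs)"
    using assms(1) by (auto simp: successively_conv_nth)
  moreover have "last (take (Suc i) xs) = xs ! i" "hd (drop j xs) = xs ! j"
    using assms(2,3) by (simp_all add: take_Suc_conv_app_nth hd_drop_conv_nth)
  ultimately show ?thesis using assms(4) by (simp add: successively_append_iff)
qed

definition walk :: "nat set set \<Rightarrow> nat set \<Rightarrow> nat \<Rightarrow> nat \<Rightarrow> nat list \<Rightarrow> bool" where
  "walk F A x y p \<longleftrightarrow>
     p \<noteq> [] \<and> hd p = x \<and> last p = y \<and> successively (adjacent F) p \<and> set p \<subseteq> A"

lemma walk_rev: "walk F A x y p \<Longrightarrow> walk F A y x (rev p)"
  unfolding walk_def successively_rev adjacent_flip by (auto simp: hd_rev last_rev)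

lemma walk_Cons:
  "walk F A y z p \<Longrightarrow> adjacent F x y \<Longrightarrow> x \<in> A \<Longrightarrow> walk F A x z (x # p)"
  by (cases p) (auto simp: walk_def)

lemma walk_snoc:
  "walk F A x y p \<Longrightarrow> adjacent F y z \<Longrightarrow> z \<in> A \<Longrightarrow> walk F A x z (p @ [z])"
  by (auto simp: walk_def successively_append_iff)

lemma walk_append:
  assumes "walk F A x y p" "walk F A y z q"
  shows "walk F A x z (p @ tl q)"
proof -
  obtain q' where q: "q = y # q'" using assms(2) by (cases q) (auto simp: walk_def)
  then show ?thesis using assms
    by (cases q') (auto simp: walk_def successively_append_iff successively_Cons)
qed

lemma walk_mono: "walk F A x y p \<Longrightarrow> set p \<subseteq> B \<Longrightarrow> walk F B x y p"
  by (simp add: walk_def)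

lemma walk_take: "walk F A x y p \<Longrightarrow> i < length p \<Longrightarrow> walk F A x (p ! i) (take (Suc i) p)"
  by (auto simp: walk_def successively_conv_nth last_conv_nth hd_conv_nth
      dest: in_set_takeD)

lemma walk_shortcut:
  assumes "walk F A x y p" "i < j" "j < length p" "adjacent F (p ! i) (p ! j)"
  shows "walk F A x y (take (Suc i) p @ drop j p)"
  using assms successively_take_drop[of "adjacent F" p i j]
  by (auto simp: walk_def dest: in_set_takeD in_set_dropD)

lemma walk_skip_cycle:
  assumes "walk F A x y p" "i < j" "j < length p" "p ! i = p ! j"
  shows "walk F A x y (take i p @ drop j p)"
proof (cases i)
  case 0
  then show ?thesis using assms by (auto simp: walk_def hd_drop_conv_nth hd_conv_nth
        successively_conv_nth dest: in_set_dropD)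
next
  case (Suc k)
  have "adjacent F (p ! k) (p ! j)"
    using assms Suc successively_nth[of "adjacent F" p k] by (simp add: walk_def)
  then show ?thesis using walk_shortcut[OF assms(1), of k j] assms Suc by simp
qed

lemma walk_induced_path:
  assumes "walk F A x y p"
  obtains q where "walk F A x y q" "distinct q"
    "\<And>i j. Suc i < j \<Longrightarrow> j < length q \<Longrightarrow> \<not> adjacent F (q ! i) (q ! j)"
proof -
  obtain q where q: "walk F A x y q"
    and shortest: "\<And>q'. walk F A x y q' \<Longrightarrow> length q \<le> length q'"
    using ex_has_least_nat[of "walk F A x y" p length] assms by blast
  have "distinct q"
  proof (rule ccontr)
    assume "\<not> distinct q"
    then obtain i j where "i < j" "j < length q" "q ! i = q ! j"
      by (metis distinct_conv_nth linorder_neqE_nat)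
    then show False
      using shortest[OF walk_skip_cycle[OF q]] by fastforce
  qed
  moreover have "\<not> adjacent F (q ! i) (q ! j)" if "Suc i < j" "j < length q" for i j
    using that shortest[OF walk_shortcut[OF q, of i j]] by fastforce
  ultimately show thesis using that q by blast
qed

section \<open>Simplicial vertices of chordal graphs\<close>

lemma cyclic_successor_lt:
  assumes "i < j" "j < L"
  shows "(j = Suc i mod L \<or> i = Suc j mod L) \<longleftrightarrow> j = Suc i \<or> (i = 0 \<and> Suc j = L)"
proof -
  have "Suc i mod L = Suc i" using assms by simp
  moreover have "Suc j mod L = (if Suc j = L then 0 else Suc j)" using assms by auto
  ultimately show ?thesis using assms by auto
qed

lemma induced_cycleI:
  assumes "3 \<le> length cs" "distinct cs" "set cs \<subseteq> U"
    and "\<And>i j. i < j \<Longrightarrow> j < length cs \<Longrightarrow>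
      adjacent F (cs ! i) (cs ! j) \<longleftrightarrow> j = Suc i \<or> (i = 0 \<and> Suc j = length cs)"
  shows "induced_cycle U F cs"
proof -
  have "{cs ! i, cs ! j} \<in> F \<longleftrightarrow> (j = Suc i mod length cs \<or> i = Suc j mod length cs)"
    if "i < length cs" "j < length cs" "i \<noteq> j" for i j
  proof (cases "i < j")
    case True
    then show ?thesis using that assms(4) cyclic_successor_lt by (simp add: adjacent_def)
  next
    case False
    then have "j < i" using that by simp
    then show ?thesis using that assms(4)[of j i] cyclic_successor_lt[of j i]
      by (auto simp: adjacent_def insert_commute)
  qed
  then show ?thesis using assms(1-3) unfolding induced_cycle_def by blast
qed

lemma induced_cycle_Cons:
  assumes q: "walk F U x y q" "distinct q" "3 \<le> length q"
    and chordless: "\<And>i j. Suc i < j \<Longrightarrow> j < length q \<Longrightarrow> \<not> adjacent F (q ! i) (q ! j)"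
    and b: "b \<in> U" "b \<notin> set q" "adjacent F b x" "adjacent F b y"
    and interior: "\<And>t. 0 < t \<Longrightarrow> t < length q - 1 \<Longrightarrow> \<not> adjacent F b (q ! t)"
  shows "induced_cycle U F (b # q)"
proof (rule induced_cycleI)
  have x: "q ! 0 = x" and y: "q ! (length q - 1) = y"
    using q(1) by (auto simp: walk_def hd_conv_nth last_conv_nth)
  fix i j assume ij: "i < j" "j < length (b # q)"
  then obtain t where t: "j = Suc t" "t < length q" by (cases j) auto
  show "adjacent F ((b # q) ! i) ((b # q) ! j) \<longleftrightarrow> j = Suc i \<or> (i = 0 \<and> Suc j = length (b # q))"
  proof (cases i)
    case 0
    have "adjacent F b (q ! t) \<longleftrightarrow> t = 0 \<or> t = length q - 1"
      using interior[of t] t x y b(3,4) by (cases "t = 0 \<or> t = length q - 1") fastforce+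
    then show ?thesis using 0 t by auto
  next
    case (Suc s)
    have "adjacent F (q ! s) (q ! t) \<longleftrightarrow> t = Suc s"
    proof
      assume "adjacent F (q ! s) (q ! t)"
      then have "\<not> Suc s < t" using chordless t(2) by blast
      then show "t = Suc s" using ij Suc t by simp
    next
      assume "t = Suc s"
      then show "adjacent F (q ! s) (q ! t)"
        using successively_nth[of "adjacent F" q s] q(1) t by (simp add: walk_def)
    qed
    then show ?thesis using Suc t by auto
  qed
qed (use assms in \<open>auto simp: walk_def\<close>)

lemma chordal_subset: "chordal U F \<Longrightarrow> U' \<subseteq> U \<Longrightarrow> chordal U' F"
  unfolding chordal_def induced_cycle_def by blast

text \<open>Otherwise a chordless x-y path through C closes up with b to an induced cycle of
length at least 4.\<close>

lemma chordal_adjacent_if_joined_outside_nbhd: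
  assumes "chordal U F" and irrefl: "\<And>z. \<not> adjacent F z z"
    and b: "b \<in> U" "adjacent F b x" "adjacent F b y"
    and xy: "x \<in> U" "y \<in> U" "x \<noteq> y"
    and C: "C \<subseteq> U - insert b (nbhd F b)"
    and p: "walk F (C \<union> {x, y}) x y p"
  shows "adjacent F x y"
proof (rule ccontr)
  assume nxy: "\<not> adjacent F x y"
  obtain q where q: "walk F (C \<union> {x, y}) x y q" "distinct q"
    and chordless: "\<And>i j. Suc i < j \<Longrightarrow> j < length q \<Longrightarrow> \<not> adjacent F (q ! i) (q ! j)"
    using walk_induced_path[OF p] by blast
  have x: "q ! 0 = x" and y: "q ! (length q - 1) = y" and q_ne: "q \<noteq> []"
    using q(1) by (auto simp: walk_def hd_conv_nth last_conv_nth)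
  have "length q \<noteq> 1" using x y xy by auto
  moreover have "length q \<noteq> 2"
    using successively_nth[of "adjacent F" q 0] q(1) x y nxy by (auto simp: walk_def)
  ultimately have long: "3 \<le> length q" using length_greater_0_conv[of q] q_ne by linarith
  have interior: "\<not> adjacent F b (q ! t)" if "0 < t" "t < length q - 1" for t
  proof -
    have "q ! t \<noteq> x" "q ! t \<noteq> y"
      using that x y q_ne nth_eq_iff_index_eq[OF q(2), of t 0]
        nth_eq_iff_index_eq[OF q(2), of t "length q - 1"] by auto
    moreover have "q ! t \<in> set q" using that by simp
    ultimately have "q ! t \<in> C" using q(1) by (auto simp: walk_def)
    then show ?thesis using C by (auto simp: nbhd_def)
  qed
  have "b \<notin> set q" using q(1) C b irrefl by (auto simp: walk_def)
  moreover have "set q \<subseteq> U" using q(1) C xy by (auto simp: walk_def)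
  ultimately have "induced_cycle U F (b # q)"
    using induced_cycle_Cons[OF walk_mono[OF q(1)] q(2) long chordless] b interior by blast
  then have "length (b # q) = 3" using assms(1) unfolding chordal_def by blast
  then show False using long by simp
qed

definition reach :: "nat set set \<Rightarrow> nat set \<Rightarrow> nat \<Rightarrow> nat set" where
  "reach F R a = {c. \<exists>p. walk F R a c p}"

definition boundary :: "nat set set \<Rightarrow> nat set \<Rightarrow> nat set \<Rightarrow> nat set" where
  "boundary F U C = {s \<in> U - C. \<exists>c\<in>C. adjacent F c s}"

lemma reach_subset: "reach F R a \<subseteq> R"
  by (auto simp: reach_def walk_def)

lemma start_in_reach: "a \<in> R \<Longrightarrow> a \<in> reach F R a"
  unfolding reach_def walk_def by (rule CollectI, rule exI[of _ "[a]"]) simp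

lemma reach_step: "c \<in> reach F R a \<Longrightarrow> z \<in> R \<Longrightarrow> adjacent F c z \<Longrightarrow> z \<in> reach F R a"
  unfolding reach_def by (blast intro: walk_snoc)

lemma walk_in_reach:
  assumes "walk F R a z p"
  shows "set p \<subseteq> reach F R a"
proof
  fix c assume "c \<in> set p"
  then obtain i where "i < length p" "c = p ! i" by (auto simp: in_set_conv_nth)
  then show "c \<in> reach F R a"
    using walk_take[of F R a z p i] assms unfolding reach_def by blast
qed

lemma reach_connected:
  assumes "c \<in> reach F R a" "c' \<in> reach F R a"
  obtains p where "walk F (reach F R a) c c' p"
proof -
  obtain p p' where p: "walk F R a c p" and p': "walk F R a c' p'"
    using assms by (auto simp: reach_def)
  have "walk F (reach F R a) c a (rev p)"
    using walk_mono[OF walk_rev[OF p]] walk_in_reach[OF p] by simp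
  moreover have "walk F (reach F R a) a c' p'"
    using walk_mono[OF p'] walk_in_reach[OF p'] .
  ultimately show thesis using that walk_append by blast
qed

lemma boundary_of_reach_outside_closed_nbhd:
  fixes a :: nat
  assumes "chordal U F" and irrefl: "\<And>z. \<not> adjacent F z z" and "b \<in> U"
  defines "C \<equiv> reach F (U - insert b (nbhd F b)) a"
  shows "boundary F U C \<subseteq> nbhd F b" and "clique F (boundary F U C)"
proof -
  have C: "C \<subseteq> U - insert b (nbhd F b)" unfolding C_def by (rule reach_subset)
  show S: "boundary F U C \<subseteq> nbhd F b"
  proof
    fix s assume "s \<in> boundary F U C"
    then obtain c where c: "c \<in> C" "adjacent F c s" and s: "s \<in> U" "s \<notin> C"
      by (auto simp: boundary_def)
    have "s \<notin> U - insert b (nbhd F b)"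
      using reach_step[of c F _ a s] c s unfolding C_def by blast
    moreover have "s \<noteq> b" using c C adjacent_commute[of F c b] by auto
    ultimately show "s \<in> nbhd F b" using s by blast
  qed
  show "clique F (boundary F U C)" unfolding clique_def
  proof (intro ballI impI)
    fix x y assume x: "x \<in> boundary F U C" and y: "y \<in> boundary F U C" and "x \<noteq> y"
    obtain c where c: "c \<in> C" "adjacent F c x" using x by (auto simp: boundary_def)
    obtain c' where c': "c' \<in> C" "adjacent F c' y" using y by (auto simp: boundary_def)
    obtain p where p: "walk F C c c' p"
      using reach_connected c(1) c'(1) unfolding C_def by metis
    then have "walk F (C \<union> {x, y}) c c' p" using walk_mono[OF p] by (auto simp: walk_def)
    then have "walk F (C \<union> {x, y}) c y (p @ [y])" using c'(2) by (simp add: walk_snoc)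
    then have "walk F (C \<union> {x, y}) x y (x # p @ [y])"
      using c(2) adjacent_commute[of F c x] by (simp add: walk_Cons)
    moreover have "adjacent F b x" "adjacent F b y" "x \<in> U" "y \<in> U"
      using x y S by (auto simp: boundary_def)
    ultimately show "adjacent F x y"
      using chordal_adjacent_if_joined_outside_nbhd[OF assms(1) irrefl \<open>b \<in> U\<close>] C \<open>x \<noteq> y\<close>
      by blast
  qed
qed

text \<open>Dirac's argument: the boundary S of the component C of a in U - N[b] is a clique, and a
simplicial vertex of the smaller graph C \<union> S that lies in C is simplicial in U.\<close>

lemma chordal_simplicial_outside_closed_nbhd:
  assumes "finite U" "chordal U F" "\<And>z. \<not> adjacent F z z"
    and "b \<in> U" "a \<in> U - insert b (nbhd F b)"
  shows "\<exists>w \<in> U - insert b (nbhd F b). simplicial F U w"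
  using assms
proof (induction "card U" arbitrary: U a b rule: less_induct)
  case less
  note irrefl = less.prems(3)
  define C where "C = reach F (U - insert b (nbhd F b)) a"
  define S where "S = boundary F U C"
  define U' where "U' = C \<union> S"
  have C: "C \<subseteq> U - insert b (nbhd F b)" unfolding C_def by (rule reach_subset)
  have "a \<in> C" unfolding C_def using less.prems(5) by (rule start_in_reach)
  have S: "S \<subseteq> nbhd F b" "clique F S"
    using boundary_of_reach_outside_closed_nbhd[OF less.prems(2) irrefl less.prems(4)]
    unfolding S_def C_def by blast+
  have "U' \<subseteq> U" using C unfolding U'_def S_def boundary_def by blast
  moreover have "b \<notin> U'" using C S(1) irrefl unfolding U'_def by auto
  ultimately have U': "card U' < card U" "finite U'" "chordal U' F"
    using less.prems(1,4) chordal_subset[OF less.prems(2)] finite_subset[of U' U]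
    by (blast intro: psubset_card_mono)+
  have lift: "simplicial F U w" if "w \<in> C" "simplicial F U' w" for w
  proof -
    have "nbhd F w \<inter> U \<subseteq> nbhd F w \<inter> U'"
      using that(1) unfolding U'_def S_def boundary_def by auto
    then show ?thesis using that(2) unfolding simplicial_def by (blast intro: clique_subset)
  qed
  show ?case
  proof (cases "clique F U'")
    case True
    then have "simplicial F U' a" unfolding simplicial_def by (auto intro: clique_subset)
    then show ?thesis using lift \<open>a \<in> C\<close> C by blast
  next
    case False
    obtain x where x: "x \<in> U'" "S \<subseteq> insert x (nbhd F x)" "\<not> U' \<subseteq> insert x (nbhd F x)"
    proof (cases "\<exists>s \<in> S. \<not> U' \<subseteq> insert s (nbhd F s)")
      case True
      then obtain s where "s \<in> S" "\<not> U' \<subseteq> insert s (nbhd F s)" by blast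
      moreover have "S \<subseteq> insert s (nbhd F s)"
        using S(2) \<open>s \<in> S\<close> unfolding clique_def by fastforce
      moreover have "s \<in> U'" using \<open>s \<in> S\<close> unfolding U'_def by blast
      ultimately show thesis using that by blast
    next
      case S_universal: False
      obtain x y where xy: "x \<in> U'" "y \<in> U'" "x \<noteq> y" "\<not> adjacent F x y"
        using False by (auto simp: clique_def)
      have "S \<subseteq> insert x (nbhd F x)"
      proof
        fix s assume "s \<in> S"
        then have "x \<in> insert s (nbhd F s)" using S_universal xy(1) by blast
        then show "s \<in> insert x (nbhd F x)" by (auto simp: adjacent_commute)
      qed
      moreover have "\<not> U' \<subseteq> insert x (nbhd F x)" using xy by auto
      ultimately show thesis using that xy(1) by blast
    qed
    then obtain a' where "a' \<in> U' - insert x (nbhd F x)" by blast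
    then have "\<exists>w \<in> U' - insert x (nbhd F x). simplicial F U' w"
      by (rule less.hyps[OF U'(1) U'(2) U'(3) irrefl x(1)])
    then obtain w where w: "w \<in> U' - insert x (nbhd F x)" "simplicial F U' w" ..
    then have "w \<in> C" using x(2) unfolding U'_def by blast
    then show ?thesis using lift w(2) C by blast
  qed
qed

lemma chordal_simplicial_vertex:
  assumes "finite U" "chordal U F" "\<And>z. \<not> adjacent F z z" "U \<noteq> {}"
  obtains w where "w \<in> U" "simplicial F U w"
proof (cases "clique F U")
  case True
  have "simplicial F U w" for w
    unfolding simplicial_def by (rule clique_subset[OF True Int_lower2])
  then show thesis using that assms(4) by blast
next
  case False
  then obtain x y where "x \<in> U" "y \<in> U - insert x (nbhd F x)"
    unfolding clique_def by auto
  then have "\<exists>w \<in> U - insert x (nbhd F x). simplicial F U w"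
    by (rule chordal_simplicial_outside_closed_nbhd[OF assms(1-3)])
  then show thesis using that by blast
qed

section \<open>Interval partitions of the clique complex\<close>

definition clique_interval_partition ::
    "nat set set \<Rightarrow> nat set \<Rightarrow> (nat set \<times> nat set) set \<Rightarrow> bool" where
  "clique_interval_partition F U D \<longleftrightarrow> finite D \<and>
     (\<forall>(\<sigma>, \<tau>) \<in> D. card \<sigma> \<le> 1 \<and> \<sigma> \<subseteq> \<tau> \<and> \<tau> \<subseteq> U \<and> clique F \<tau>) \<and>
     (\<forall>K. K \<subseteq> U \<longrightarrow> clique F K \<longrightarrow> (\<exists>!p \<in> D. fst p \<subseteq> K \<and> K \<subseteq> snd p))"

lemma clique_interval_partition_interval:
  assumes "clique_interval_partition F U D" "(\<sigma>, \<tau>) \<in> D"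
  shows "card \<sigma> \<le> 1" "\<sigma> \<subseteq> \<tau>" "\<tau> \<subseteq> U" "clique F \<tau>"
proof -
  have "\<forall>(\<sigma>, \<tau>) \<in> D. card \<sigma> \<le> 1 \<and> \<sigma> \<subseteq> \<tau> \<and> \<tau> \<subseteq> U \<and> clique F \<tau>"
    using assms(1) unfolding clique_interval_partition_def by (elim conjE)
  then show "card \<sigma> \<le> 1" "\<sigma> \<subseteq> \<tau>" "\<tau> \<subseteq> U" "clique F \<tau>"
    using assms(2) by auto
qed

lemma clique_interval_partition_cover:
  assumes "clique_interval_partition F U D" "K \<subseteq> U" "clique F K"
  shows "\<exists>!p \<in> D. fst p \<subseteq> K \<and> K \<subseteq> snd p"
proof -
  have "\<forall>K. K \<subseteq> U \<longrightarrow> clique F K \<longrightarrow> (\<exists>!p \<in> D. fst p \<subseteq> K \<and> K \<subseteq> snd p)"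
    using assms(1) unfolding clique_interval_partition_def by (elim conjE)
  from this[rule_format, OF assms(2,3)] show ?thesis .
qed

lemma clique_interval_partition_empty: "clique_interval_partition F {} {({}, {})}"
  by (auto simp: clique_interval_partition_def clique_def)

lemma clique_interval_partition_insert_simplicial:
  assumes w: "w \<in> U" "simplicial F U w" and D: "clique_interval_partition F (U - {w}) D"
  defines "N \<equiv> insert w (nbhd F w \<inter> U)"
  shows "clique_interval_partition F U (insert ({w}, N) D)"
  unfolding clique_interval_partition_def
proof (intro conjI allI impI)
  show "finite (insert ({w}, N) D)"
    using D unfolding clique_interval_partition_def by simp
  have "clique F N"
    using w(2) unfolding N_def simplicial_def clique_def by (auto simp: adjacent_commute)
  moreover have "N \<subseteq> U" using w(1) unfolding N_def by blast
  ultimately show "\<forall>(\<sigma>, \<tau>) \<in> insert ({w}, N) D. card \<sigma> \<le> 1 \<and> \<sigma> \<subseteq> \<tau> \<and> \<tau> \<subseteq> U \<and> clique F \<tau>"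
    using clique_interval_partition_interval[OF D] unfolding N_def by fastforce
  fix K assume K: "K \<subseteq> U" "clique F K"
  show "\<exists>!p \<in> insert ({w}, N) D. fst p \<subseteq> K \<and> K \<subseteq> snd p"
  proof (cases "w \<in> K")
    case True
    have "K \<subseteq> N"
    proof
      fix x assume "x \<in> K"
      then show "x \<in> N" using K True unfolding N_def clique_def by (cases "x = w") auto
    qed
    moreover have "\<not> K \<subseteq> snd p" if "p \<in> D" for p
      using clique_interval_partition_interval(3)[OF D, of "fst p" "snd p"] that True by auto
    ultimately show ?thesis using True by (intro ex1I[of _ "({w}, N)"]) auto
  next
    case False
    have "K \<subseteq> U - {w}" using K(1) False by blast
    from clique_interval_partition_cover[OF D this K(2)]
    obtain p where p: "p \<in> D" "fst p \<subseteq> K" "K \<subseteq> snd p"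
      and unique: "\<And>q. q \<in> D \<Longrightarrow> fst q \<subseteq> K \<Longrightarrow> K \<subseteq> snd q \<Longrightarrow> q = p"
      by (elim ex1E) blast
    show ?thesis
    proof (rule ex1I[of _ p])
      show "p \<in> insert ({w}, N) D \<and> fst p \<subseteq> K \<and> K \<subseteq> snd p" using p by blast
      fix q assume q: "q \<in> insert ({w}, N) D \<and> fst q \<subseteq> K \<and> K \<subseteq> snd q"
      then have "q \<in> D" using False by auto
      then show "q = p" using unique q by blast
    qed
  qed
qed

lemma chordal_clique_interval_partition:
  assumes "finite U" "chordal U F" "\<And>z. \<not> adjacent F z z"
  shows "\<exists>D. clique_interval_partition F U D"
  using assms(1,2)
proof (induction U rule: finite_remove_induct)
  case empty
  then show ?case using clique_interval_partition_empty by blast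
next
  case (remove U)
  obtain w where w: "w \<in> U" "simplicial F U w"
    using chordal_simplicial_vertex[OF remove.hyps(1) remove.prems assms(3) remove.hyps(2)] .
  have "chordal (U - {w}) F" using chordal_subset[OF remove.prems] by blast
  then obtain D where "clique_interval_partition F (U - {w}) D"
    using remove.IH[OF w(1)] by blast
  then show ?case using clique_interval_partition_insert_simplicial[OF w] by blast
qed

section \<open>Stanley decompositions of S/I(G)\<close>

definition support :: "(nat \<Rightarrow> nat) \<Rightarrow> nat set" where
  "support f = {v. f v \<noteq> 0}"

lemma mem_stanley_piece_iff:
  assumes "u \<subseteq> Z"
  shows "f \<in> stanley_piece u Z \<longleftrightarrow> u \<subseteq> support f \<and> support f \<subseteq> Z"
proof
  assume "f \<in> stanley_piece u Z"
  then obtain m where "monomial_in Z m" "f = (\<lambda>v. (if v \<in> u then 1 else 0) + m v)"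
    unfolding stanley_piece_def by blast
  then show "u \<subseteq> support f \<and> support f \<subseteq> Z"
    using assms unfolding monomial_in_def support_def by auto
next
  assume f: "u \<subseteq> support f \<and> support f \<subseteq> Z"
  define m where "m = (\<lambda>v. f v - (if v \<in> u then 1 else 0))"
  have "monomial_in Z m" using f unfolding monomial_in_def m_def support_def by auto
  moreover have "f = (\<lambda>v. (if v \<in> u then 1 else 0) + m v)"
    using f unfolding m_def support_def by (auto simp: fun_eq_iff)
  ultimately show "f \<in> stanley_piece u Z" unfolding stanley_piece_def by blast
qed

lemma complement_edges_irrefl: "\<not> adjacent (complement_edges V E) z z"
  by (auto simp: adjacent_def complement_edges_def doubleton_eq_iff)

lemma std_monomial_iff_clique:
  assumes "simple_graph n V E"
  shows "std_monomial n E f \<longleftrightarrow>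
    support f \<subseteq> {1..n} \<and> clique (complement_edges V E) (support f \<inter> V)"
proof -
  have "(\<forall>e\<in>E. \<not> (\<forall>v\<in>e. 1 \<le> f v)) \<longleftrightarrow> clique (complement_edges V E) (support f \<inter> V)"
  proof
    assume "\<forall>e\<in>E. \<not> (\<forall>v\<in>e. 1 \<le> f v)"
    then show "clique (complement_edges V E) (support f \<inter> V)"
      unfolding clique_def adjacent_def complement_edges_def support_def by fastforce
  next
    assume clique: "clique (complement_edges V E) (support f \<inter> V)"
    show "\<forall>e\<in>E. \<not> (\<forall>v\<in>e. 1 \<le> f v)"
    proof (intro ballI notI)
      fix e assume "e \<in> E" and "\<forall>v\<in>e. 1 \<le> f v"
      moreover obtain x y where "e = {x, y}" "x \<noteq> y" "e \<subseteq> V"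
        using assms \<open>e \<in> E\<close> unfolding simple_graph_def by (metis card_2_iff)
      ultimately have "{x, y} \<in> complement_edges V E"
        using clique unfolding clique_def adjacent_def support_def by auto
      then show False
        using \<open>e \<in> E\<close> \<open>e = {x, y}\<close> unfolding complement_edges_def
        by (auto simp: doubleton_eq_iff insert_commute)
    qed
  qed
  then show ?thesis unfolding std_monomial_def monomial_in_def support_def by auto
qed

lemma mem_stanley_piece_extend_iff:
  assumes "\<sigma> \<subseteq> \<tau>" "\<tau> \<subseteq> V" "support f \<subseteq> W"
  shows "f \<in> stanley_piece \<sigma> (\<tau> \<union> (W - V)) \<longleftrightarrow> \<sigma> \<subseteq> support f \<inter> V \<and> support f \<inter> V \<subseteq> \<tau>"
proof -
  have "\<sigma> \<subseteq> \<tau> \<union> (W - V)" using assms(1) by blast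
  then show ?thesis using mem_stanley_piece_iff[of \<sigma> "\<tau> \<union> (W - V)" f] assms by blast
qed

lemma stanley_piece_extend_subset_std:
  assumes G: "simple_graph n V E" and D: "clique_interval_partition (complement_edges V E) V D"
    and p: "(\<sigma>, \<tau>) \<in> D"
  shows "stanley_piece \<sigma> (\<tau> \<union> ({1..n} - V)) \<subseteq> Collect (std_monomial n E)"
proof
  note interval = clique_interval_partition_interval[OF D p]
  fix f assume f: "f \<in> stanley_piece \<sigma> (\<tau> \<union> ({1..n} - V))"
  have "\<sigma> \<subseteq> \<tau> \<union> ({1..n} - V)" using interval(2) by blast
  then have "support f \<subseteq> {1..n}"
    using f mem_stanley_piece_iff interval(3) G unfolding simple_graph_def by blast
  moreover have "support f \<inter> V \<subseteq> \<tau>"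
    using f mem_stanley_piece_extend_iff[OF interval(2,3) calculation] by blast
  ultimately show "f \<in> Collect (std_monomial n E)"
    using std_monomial_iff_clique[OF G] clique_subset[OF interval(4)] by blast
qed

lemma sqfree_stanley_decomp_of_clique_intervals:
  assumes G: "simple_graph n V E" and D: "clique_interval_partition (complement_edges V E) V D"
  defines "extend \<equiv> \<lambda>(\<sigma>, \<tau>). (\<sigma>, \<tau> \<union> ({1..n} - V))"
  shows "sqfree_stanley_decomp n E (extend ` D)"
  unfolding sqfree_stanley_decomp_def
proof (intro conjI allI impI)
  note interval = clique_interval_partition_interval[OF D]
  have V: "V \<subseteq> {1..n}" using G unfolding simple_graph_def by blast
  have piece_iff: "f \<in> stanley_piece (fst (extend p)) (snd (extend p)) \<longleftrightarrow>
      fst p \<subseteq> support f \<inter> V \<and> support f \<inter> V \<subseteq> snd p"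
    if "p \<in> D" "support f \<subseteq> {1..n}" for p f
    using mem_stanley_piece_extend_iff[OF interval(2,3)[of "fst p" "snd p"]] that
    unfolding extend_def by (simp add: case_prod_beta)
  show "finite (extend ` D)" using D unfolding clique_interval_partition_def by simp
  show "\<forall>(u, Z) \<in> extend ` D. Z \<subseteq> {1..n} \<and> u \<subseteq> Z \<and> stanley_piece u Z \<subseteq> Collect (std_monomial n E)"
  proof
    fix x assume "x \<in> extend ` D"
    then obtain \<sigma> \<tau> where p: "(\<sigma>, \<tau>) \<in> D" and x: "x = (\<sigma>, \<tau> \<union> ({1..n} - V))"
      unfolding extend_def by auto
    then show "case x of (u, Z) \<Rightarrow> Z \<subseteq> {1..n} \<and> u \<subseteq> Z \<and> stanley_piece u Z \<subseteq> Collect (std_monomial n E)"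
      using interval(2,3)[OF p] V stanley_piece_extend_subset_std[OF G D p] by auto
  qed
  fix f assume "std_monomial n E f"
  then have f: "support f \<subseteq> {1..n}" "clique (complement_edges V E) (support f \<inter> V)"
    using std_monomial_iff_clique[OF G] by blast+
  from clique_interval_partition_cover[OF D Int_lower2 f(2)]
  obtain p where p: "p \<in> D" "fst p \<subseteq> support f \<inter> V" "support f \<inter> V \<subseteq> snd p"
    and unique: "\<And>q. q \<in> D \<Longrightarrow> fst q \<subseteq> support f \<inter> V \<Longrightarrow> support f \<inter> V \<subseteq> snd q \<Longrightarrow> q = p"
    by (elim ex1E) blast
  show "\<exists>!x. x \<in> extend ` D \<and> f \<in> stanley_piece (fst x) (snd x)"
  proof (rule ex1I[of _ "extend p"])
    show "extend p \<in> extend ` D \<and> f \<in> stanley_piece (fst (extend p)) (snd (extend p))"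
      using p piece_iff[OF p(1) f(1)] by blast
    fix x assume x: "x \<in> extend ` D \<and> f \<in> stanley_piece (fst x) (snd x)"
    then obtain q where "q \<in> D" "x = extend q" by blast
    then show "x = extend p" using x piece_iff[OF _ f(1)] unique by blast
  qed
qed

theorem theorem5p5:
  fixes n :: nat and V :: "nat set" and E :: "nat set set"
  assumes "simple_graph n V E"
    and "co_chordal V E"
    and "E \<noteq> {}"
  shows "sreg n E \<le> 1"
proof -
  have "finite V"
    using assms(1) finite_subset[of V "{1..n}"] unfolding simple_graph_def by blast
  then obtain D where D: "clique_interval_partition (complement_edges V E) V D"
    using chordal_clique_interval_partition complement_edges_irrefl assms(2)
    unfolding co_chordal_def by blast
  let ?D = "(\<lambda>(\<sigma>, \<tau>). (\<sigma>, \<tau> \<union> ({1..n} - V))) ` D"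
  have "sqfree_stanley_decomp n E ?D"
    using sqfree_stanley_decomp_of_clique_intervals[OF assms(1) D] .
  moreover have "\<forall>(u, Z) \<in> ?D. card u \<le> 1"
    using clique_interval_partition_interval(1)[OF D] by auto
  ultimately show ?thesis unfolding sreg_def by (intro Least_le) blast
qed

end
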